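(* Let $G=(V,E)$ be a vertex-transitive simple undirected graph with $V=[n]$ and let $k\ge1$ be an integer. Consider the problem $$\max_{Z,X\in\mathbb S^n}\langle I,Z\rangle\ \text{ s.t. } Z_{ij}=0\ (\{i,j\}\in E),\ X_{ii}=0\ (i\in[n]),\ Z\ge0,\ X\ge0,\ Z-X\succeq0,\ \begin{bmatrix}1&\mathrm{diag}(Z)^{\top}\\ \mathrm{diag}(Z)&Z+(k-1)X\end{bmatrix}\succeq0.$$ Then the constraints $Z_{ii}-Z_{ij}-(k-1)X_{ij}\ge 0$ for all $i,j\in[n]$ with $i\ne j$ are redundant for this problem, i.e., adding them does not change its optimal value (there is an optimal solution satisfying them).
   Context: A graph is vertex-transitive if for any two vertices there is a graph automorphism mapping one to the other. $\mathbb S^n$ denotes real symmetric $n\times n$ matrices, $\langle A,B\rangle=\mathrm{trace}(AB)$, $\ge0$ entrywise nonnegativity, $\succeq0$ positive semidefiniteness, $\mathrm{diag}(Z)$ the vector of diagonal entries. *)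

theory Defs
  imports "HOL-Analysis.Analysis"
begin

definition symmetric_mat :: "real^'n^'n \<Rightarrow> bool" where
  "symmetric_mat A \<longleftrightarrow> transpose A = A"

definition psd :: "real^'n^'n \<Rightarrow> bool" where
  "psd A \<longleftrightarrow> symmetric_mat A \<and> (\<forall>x. 0 \<le> x \<bullet> (A *v x))"

definition nonneg_mat :: "real^'n^'n \<Rightarrow> bool" where
  "nonneg_mat A \<longleftrightarrow> (\<forall>i j. 0 \<le> A $ i $ j)"

definition simple_graph :: "('n \<Rightarrow> 'n \<Rightarrow> bool) \<Rightarrow> bool" where
  "simple_graph E \<longleftrightarrow> (\<forall>i j. E i j \<longleftrightarrow> E j i) \<and> (\<forall>i. \<not> E i i)"

definition vertex_transitive :: "('n \<Rightarrow> 'n \<Rightarrow> bool) \<Rightarrow> bool" where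
  "vertex_transitive E \<longleftrightarrow>
     (\<forall>u v. \<exists>\<sigma>. bij \<sigma> \<and> (\<forall>a b. E a b \<longleftrightarrow> E (\<sigma> a) (\<sigma> b)) \<and> \<sigma> u = v)"

text \<open>The (n+1)x(n+1) block matrix [[1, diag(Z)^T],[diag(Z), Z+(k-1)X]], indexed by 'n option
  (None is the extra first row/column).\<close>
definition block_mat :: "nat \<Rightarrow> real^'n^'n \<Rightarrow> real^'n^'n \<Rightarrow> real^('n option)^('n option)" where
  "block_mat k Z X = (\<chi> i j. case (i, j) of
       (None, None) \<Rightarrow> 1
     | (None, Some b) \<Rightarrow> Z $ b $ b
     | (Some a, None) \<Rightarrow> Z $ a $ a
     | (Some a, Some b) \<Rightarrow> Z $ a $ b + (real k - 1) * X $ a $ b)"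

definition feasible :: "('n \<Rightarrow> 'n \<Rightarrow> bool) \<Rightarrow> nat \<Rightarrow> real^'n^'n \<Rightarrow> real^'n^'n \<Rightarrow> bool" where
  "feasible E k Z X \<longleftrightarrow>
     symmetric_mat Z \<and> symmetric_mat X \<and>
     (\<forall>i j. E i j \<longrightarrow> Z $ i $ j = 0) \<and>
     (\<forall>i. X $ i $ i = 0) \<and>
     nonneg_mat Z \<and> nonneg_mat X \<and>
     psd (Z - X) \<and>
     psd (block_mat k Z X)"

end

theory Submission
  imports Defs
begin

(* An optimal solution exists because the feasible set is compact and contains (0, 0).
   Simultaneously reindexing rows and columns by a graph automorphism preserves feasibility
   and the trace, and so does averaging feasible solutions (the block matrix is affine in
   (Z, X)).  Averaging an optimal solution over Aut(G) therefore gives an optimal solution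
   invariant under Aut(G), whose diagonal is constant by vertex transitivity.  For such a
   solution, testing the block matrix against e_i - e_j gives
   Z_ii + Z_jj - 2 (Z_ij + (k - 1) X_ij) >= 0, which is the redundant constraint. *)

lemma symmetric_mat_iff: "symmetric_mat A \<longleftrightarrow> (\<forall>i j. A $ i $ j = A $ j $ i)"
  unfolding symmetric_mat_def transpose_def vec_eq_iff by auto

lemma psd_symmetric: "psd A \<Longrightarrow> A $ j $ i = A $ i $ j"
  unfolding psd_def symmetric_mat_iff by simp

lemma psd_two_point_form:
  fixes A :: "real^'n::finite^'n"
  assumes "psd A"
  shows "0 \<le> t * t * A $ i $ i + 2 * t * s * A $ i $ j + s * s * A $ j $ j"
proof -
  define x :: "real^'n" where "x = t *\<^sub>R axis i 1 + s *\<^sub>R axis j 1"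
  have "0 \<le> x \<bullet> (A *v x)"
    using assms unfolding psd_def by blast
  also have "\<dots> = t * t * A $ i $ i + 2 * t * s * A $ i $ j + s * s * A $ j $ j"
    using psd_symmetric[OF assms, of j i]
    by (simp add: x_def algebra_simps matrix_scaleR_vector_ac scaleR_matrix_vector_assoc
        matrix_vector_mult_basis inner_axis' column_def)
  finally show ?thesis .
qed

lemma psd_offdiag_le:
  fixes A :: "real^'n::finite^'n"
  shows "psd A \<Longrightarrow> 2 * A $ i $ j \<le> A $ i $ i + A $ j $ j"
  using psd_two_point_form[of A 1 i "-1" j] by simp

lemma psd_offdiag_ge:
  fixes A :: "real^'n::finite^'n"
  shows "psd A \<Longrightarrow> - (A $ i $ i + A $ j $ j) \<le> 2 * A $ i $ j"
  using psd_two_point_form[of A 1 i 1 j] by simp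

lemma psd_outer_product:
  fixes v :: "real^'n::finite"
  shows "psd (\<chi> i j. v $ i * v $ j)"
proof -
  have "x \<bullet> ((\<chi> i j. v $ i * v $ j) *v x) = (v \<bullet> x) * (v \<bullet> x)" for x
    by (simp add: matrix_vector_mult_def inner_vec_def sum_distrib_left sum_distrib_right mult_ac)
  then show ?thesis
    by (simp add: psd_def symmetric_mat_iff mult.commute)
qed

lemma psd_congruence:
  fixes A :: "real^'n::finite^'n" and P :: "real^'m::finite^'n"
  assumes "psd A"
  shows "psd (transpose P ** A ** P)"
  unfolding psd_def symmetric_mat_def
proof
  show "transpose (transpose P ** A ** P) = transpose P ** A ** P"
    using assms by (simp add: psd_def symmetric_mat_def matrix_transpose_mul matrix_mul_assoc)
  show "\<forall>x. 0 \<le> x \<bullet> ((transpose P ** A ** P) *v x)"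
  proof
    fix x :: "real^'m"
    have "x \<bullet> ((transpose P ** A ** P) *v x) = x \<bullet> (transpose P *v (A *v (P *v x)))"
      by (simp only: matrix_vector_mul_assoc matrix_mul_assoc)
    also have "\<dots> = (P *v x) \<bullet> (A *v (P *v x))"
      by (metis dot_lmul_matrix inner_commute transpose_matrix_vector)
    finally have "x \<bullet> ((transpose P ** A ** P) *v x) = (P *v x) \<bullet> (A *v (P *v x))" .
    then show "0 \<le> x \<bullet> ((transpose P ** A ** P) *v x)"
      using assms unfolding psd_def by simp
  qed
qed

lemma psd_add: "psd A \<Longrightarrow> psd B \<Longrightarrow> psd (A + B)"
  by (simp add: psd_def symmetric_mat_def matrix_vector_mult_add_rdistrib inner_add_right
      transpose_def vec_eq_iff)

lemma psd_scaleR: "psd A \<Longrightarrow> 0 \<le> c \<Longrightarrow> psd (c *\<^sub>R A)"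
  by (simp add: psd_def symmetric_mat_def scaleR_matrix_vector_assoc[symmetric]
      transpose_def vec_eq_iff)

lemma psd_zero: "psd 0"
  by (simp add: psd_def symmetric_mat_iff)

lemma psd_sum: "(\<And>s. s \<in> S \<Longrightarrow> psd (M s)) \<Longrightarrow> psd (\<Sum>s\<in>S. M s)"
  by (induction S rule: infinite_finite_induct) (simp_all add: psd_zero psd_add)

lemma closed_psd: "closed {A :: real^'n::finite^'n. psd A}"
  unfolding psd_def symmetric_mat_iff matrix_vector_mult_def inner_vec_def
  by (intro closed_Collect_conj closed_Collect_all closed_Collect_eq closed_Collect_le
      continuous_intros)

lemma closed_Collect_psd: "continuous_on UNIV f \<Longrightarrow> closed {x. psd (f x)}"
  using continuous_closed_preimage[OF _ closed_UNIV closed_psd, of f] by (simp add: vimage_def)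

lemma bounded_entrywise:
  fixes S :: "(real^'n::finite^'m::finite) set"
  assumes "\<And>A i j. A \<in> S \<Longrightarrow> \<bar>A $ i $ j\<bar> \<le> c"
  shows "bounded S"
  unfolding bounded_iff
proof (intro exI ballI)
  fix A assume "A \<in> S"
  have "norm A \<le> (\<Sum>i\<in>UNIV. norm (A $ i))"
    unfolding norm_vec_def by (rule L2_set_le_sum) auto
  also have "\<dots> \<le> (\<Sum>i\<in>(UNIV :: 'm set). \<Sum>j\<in>(UNIV :: 'n set). c)"
    using \<open>A \<in> S\<close> assms by (intro sum_mono order_trans[OF norm_le_l1_cart]) auto
  finally show "norm A \<le> real CARD('m) * (real CARD('n) * c)"
    by simp
qed

definition reindex_mat :: "('m \<Rightarrow> 'n) \<Rightarrow> real^'n^'n \<Rightarrow> real^'m^'m" where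
  "reindex_mat \<sigma> A = (\<chi> i j. A $ \<sigma> i $ \<sigma> j)"

lemma reindex_mat_nth [simp]: "reindex_mat \<sigma> A $ i $ j = A $ \<sigma> i $ \<sigma> j"
  by (simp add: reindex_mat_def)

lemma psd_reindex_mat:
  fixes A :: "real^'n::finite^'n" and \<sigma> :: "'m::finite \<Rightarrow> 'n"
  assumes "psd A"
  shows "psd (reindex_mat \<sigma> A)"
proof -
  define P :: "real^'m^'n" where "P = (\<chi> a i. if \<sigma> i = a then 1 else 0)"
  have "reindex_mat \<sigma> A = transpose P ** A ** P"
    by (simp add: vec_eq_iff P_def matrix_matrix_mult_def transpose_def if_distrib[of "\<lambda>c. c * _"]
        if_distrib[of "\<lambda>c. _ * c"] sum.delta eq_commute[of "\<sigma> _"] cong: if_cong)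
  then show ?thesis
    using psd_congruence[OF assms] by simp
qed

lemma trace_reindex_mat: "bij \<sigma> \<Longrightarrow> trace (reindex_mat \<sigma> A) = trace A"
  unfolding trace_def reindex_mat_nth by (rule sum.reindex_bij_betw)

definition mat_average :: "'s set \<Rightarrow> ('s \<Rightarrow> real^'n^'n) \<Rightarrow> real^'n^'n" where
  "mat_average S M = (1 / real (card S)) *\<^sub>R (\<Sum>s\<in>S. M s)"

lemma mat_average_nth [simp]:
  "mat_average S M $ i $ j = (\<Sum>s\<in>S. M s $ i $ j) / real (card S)"
  by (simp add: mat_average_def)

lemma psd_mat_average: "(\<And>s. s \<in> S \<Longrightarrow> psd (M s)) \<Longrightarrow> psd (mat_average S M)"
  unfolding mat_average_def by (intro psd_scaleR psd_sum) auto

lemma block_mat_nth [simp]: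
  "block_mat k Z X $ None $ None = 1"
  "block_mat k Z X $ None $ Some b = Z $ b $ b"
  "block_mat k Z X $ Some a $ None = Z $ a $ a"
  "block_mat k Z X $ Some a $ Some b = Z $ a $ b + (real k - 1) * X $ a $ b"
  by (simp_all add: block_mat_def)

lemma block_mat_reindex_mat:
  "block_mat k (reindex_mat \<sigma> Z) (reindex_mat \<sigma> X) = reindex_mat (map_option \<sigma>) (block_mat k Z X)"
  unfolding vec_eq_iff
proof (intro allI)
  fix i j
  show "block_mat k (reindex_mat \<sigma> Z) (reindex_mat \<sigma> X) $ i $ j =
      reindex_mat (map_option \<sigma>) (block_mat k Z X) $ i $ j"
    by (cases i; cases j) simp_all
qed

lemma block_mat_average:
  assumes "finite S" "S \<noteq> {}"
  shows "block_mat k (mat_average S Zs) (mat_average S Xs) =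
    mat_average S (\<lambda>s. block_mat k (Zs s) (Xs s))"
  unfolding vec_eq_iff
proof (intro allI)
  have "0 < card S"
    using assms by (simp add: card_gt_0_iff)
  fix i j
  show "block_mat k (mat_average S Zs) (mat_average S Xs) $ i $ j =
      mat_average S (\<lambda>s. block_mat k (Zs s) (Xs s)) $ i $ j"
    by (cases i; cases j)
      (simp_all add: \<open>0 < card S\<close> sum.distrib sum_distrib_left add_divide_distrib)
qed

lemma continuous_on_block_mat [continuous_intros]:
  assumes "continuous_on S f" "continuous_on S g"
  shows "continuous_on S (\<lambda>x. block_mat k (f x) (g x))"
proof -
  have "continuous_on S (\<lambda>x. block_mat k (f x) (g x) $ i $ j)" for i j
    using assms by (cases i; cases j) (simp_all add: continuous_intros)
  then have "continuous_on S (\<lambda>x. \<chi> i j. block_mat k (f x) (g x) $ i $ j)"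
    by (intro continuous_on_vec_lambda)
  then show ?thesis
    by simp
qed

lemma feasible_reindex_mat:
  fixes \<sigma> :: "'m::finite \<Rightarrow> 'n::finite"
  assumes "feasible E k Z X" and "\<And>a b. E' a b \<Longrightarrow> E (\<sigma> a) (\<sigma> b)"
  shows "feasible E' k (reindex_mat \<sigma> Z) (reindex_mat \<sigma> X)"
proof -
  have "reindex_mat \<sigma> Z - reindex_mat \<sigma> X = reindex_mat \<sigma> (Z - X)"
    by (simp add: vec_eq_iff)
  then show ?thesis
    using assms unfolding feasible_def symmetric_mat_iff nonneg_mat_def block_mat_reindex_mat
    by (simp add: psd_reindex_mat)
qed

lemma feasible_mat_average:
  assumes "finite S" "S \<noteq> {}" and feas: "\<And>s. s \<in> S \<Longrightarrow> feasible E k (Zs s) (Xs s)"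
  shows "feasible E k (mat_average S Zs) (mat_average S Xs)"
  unfolding feasible_def
proof (intro conjI)
  have "mat_average S Zs - mat_average S Xs = mat_average S (\<lambda>s. Zs s - Xs s)"
    by (simp add: vec_eq_iff sum_subtractf diff_divide_distrib)
  then show "psd (mat_average S Zs - mat_average S Xs)"
    using feas by (simp add: psd_mat_average feasible_def)
  show "psd (block_mat k (mat_average S Zs) (mat_average S Xs))"
    using feas by (simp add: psd_mat_average feasible_def block_mat_average[OF assms(1,2)])
qed (use feas in \<open>auto simp: feasible_def symmetric_mat_iff nonneg_mat_def
      intro!: divide_nonneg_nonneg sum_nonneg sum.cong\<close>)

lemma feasible_redundant_constraint:
  assumes "feasible E k Z X" and "Z $ j $ j = Z $ i $ i"
  shows "0 \<le> Z $ i $ i - Z $ i $ j - (real k - 1) * X $ i $ j"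
proof -
  have "psd (block_mat k Z X)" "\<forall>i. X $ i $ i = 0" "symmetric_mat Z" "symmetric_mat X"
    using assms(1) unfolding feasible_def by auto
  then show ?thesis
    using psd_offdiag_le[of "block_mat k Z X" "Some i" "Some j"] assms(2)
    by (simp add: symmetric_mat_iff)
qed

lemma feasible_Z_entry_le_one:
  assumes "feasible E k Z X" and "k \<ge> 1"
  shows "Z $ i $ j \<le> 1"
proof -
  have block: "psd (block_mat k Z X)" and "\<forall>i. X $ i $ i = 0" "nonneg_mat X"
    using assms(1) unfolding feasible_def by auto
  then have diag: "Z $ a $ a \<le> 1" for a
    using psd_offdiag_le[OF block, of None "Some a"] by simp
  have "0 \<le> (real k - 1) * X $ i $ j"
    using \<open>nonneg_mat X\<close> assms(2) by (simp add: nonneg_mat_def)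
  then show ?thesis
    using psd_offdiag_le[OF block, of "Some i" "Some j"] diag[of i] diag[of j]
      \<open>\<forall>i. X $ i $ i = 0\<close>
    by simp
qed

lemma feasible_X_entry_le_two:
  assumes "feasible E k Z X" and "k \<ge> 1"
  shows "X $ i $ j \<le> 2"
proof -
  have "psd (Z - X)" "\<forall>i. X $ i $ i = 0"
    using assms(1) unfolding feasible_def by auto
  then show ?thesis
    using psd_offdiag_ge[of "Z - X" i j] feasible_Z_entry_le_one[OF assms, of i i]
      feasible_Z_entry_le_one[OF assms, of j j] feasible_Z_entry_le_one[OF assms, of i j]
    by simp
qed

lemma feasible_zero:
  fixes E :: "'n::finite \<Rightarrow> 'n \<Rightarrow> bool"
  shows "feasible E k 0 0"
proof -
  have "block_mat k (0 :: real^'n^'n) 0 $ i $ j = axis None 1 $ i * axis None 1 $ j" for i j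
    by (cases i; cases j) (simp_all add: axis_def)
  then have "block_mat k (0 :: real^'n^'n) 0 = (\<chi> i j. axis None 1 $ i * axis None 1 $ j)"
    by (simp add: vec_eq_iff)
  then have "psd (block_mat k (0 :: real^'n^'n) 0)"
    by (simp only: psd_outer_product)
  then show ?thesis
    by (simp add: feasible_def symmetric_mat_iff nonneg_mat_def psd_zero)
qed

lemma closed_feasible_set: "closed {(Z, X). feasible E k Z X}"
  unfolding case_prod_unfold feasible_def symmetric_mat_iff nonneg_mat_def
  by (intro closed_Collect_conj closed_Collect_all closed_Collect_eq closed_Collect_le
      closed_Collect_imp open_Collect_const closed_Collect_psd continuous_intros)

lemma compact_feasible_set:
  fixes E :: "'n::finite \<Rightarrow> 'n \<Rightarrow> bool"
  assumes "k \<ge> 1"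
  shows "compact {(Z, X). feasible E k Z X}"
proof -
  let ?B = "{A :: real^'n^'n. \<forall>i j. \<bar>A $ i $ j\<bar> \<le> 2}"
  have "bounded ?B"
    by (rule bounded_entrywise[where c = 2]) simp
  then have "bounded (?B \<times> ?B)"
    by (intro bounded_Times)
  moreover have "Z \<in> ?B \<and> X \<in> ?B" if "feasible E k Z X" for Z X
  proof -
    have "0 \<le> Z $ i $ j \<and> 0 \<le> X $ i $ j" for i j
      using that by (simp add: feasible_def nonneg_mat_def)
    then show ?thesis
      using feasible_Z_entry_le_one[OF that assms] feasible_X_entry_le_two[OF that assms]
      by (auto intro: order_trans[of _ 1])
  qed
  then have "{(Z, X). feasible E k Z X} \<subseteq> ?B \<times> ?B"
    by auto
  ultimately have "bounded {(Z, X). feasible E k Z X}"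
    by (rule bounded_subset)
  with closed_feasible_set show ?thesis
    by (simp add: compact_eq_bounded_closed)
qed

lemma feasible_trace_maximum_exists:
  fixes E :: "'n::finite \<Rightarrow> 'n \<Rightarrow> bool"
  assumes "k \<ge> 1"
  obtains Z X where "feasible E k Z X" and "\<And>Z' X'. feasible E k Z' X' \<Longrightarrow> trace Z' \<le> trace Z"
proof -
  have "\<exists>p\<in>{(Z, X). feasible E k Z X}. \<forall>q\<in>{(Z, X). feasible E k Z X}. trace (fst q) \<le> trace (fst p)"
  proof (rule continuous_attains_sup)
    show "compact {(Z, X). feasible E k Z X}"
      using compact_feasible_set[OF assms] .
    show "{(Z, X). feasible E k Z X} \<noteq> {}"
      using feasible_zero by blast
    show "continuous_on {(Z, X). feasible E k Z X} (\<lambda>p. trace (fst p))"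
      unfolding trace_def by (intro continuous_intros)
  qed
  then show ?thesis
    using that by auto
qed

definition graph_automorphisms :: "('n \<Rightarrow> 'n \<Rightarrow> bool) \<Rightarrow> ('n \<Rightarrow> 'n) set" where
  "graph_automorphisms E = {\<sigma>. bij \<sigma> \<and> (\<forall>a b. E a b \<longleftrightarrow> E (\<sigma> a) (\<sigma> b))}"

lemma id_graph_automorphisms: "id \<in> graph_automorphisms E"
  by (simp add: graph_automorphisms_def)

lemma comp_graph_automorphisms:
  "\<sigma> \<in> graph_automorphisms E \<Longrightarrow> \<tau> \<in> graph_automorphisms E \<Longrightarrow> \<sigma> \<circ> \<tau> \<in> graph_automorphisms E"
  by (simp add: graph_automorphisms_def bij_comp)

lemma bij_betw_comp_right_graph_automorphisms:
  fixes E :: "'n::finite \<Rightarrow> 'n \<Rightarrow> bool"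
  assumes "\<tau> \<in> graph_automorphisms E"
  shows "bij_betw (\<lambda>\<sigma>. \<sigma> \<circ> \<tau>) (graph_automorphisms E) (graph_automorphisms E)"
proof (rule bij_betw_imageI)
  have "surj \<tau>"
    using assms by (simp add: graph_automorphisms_def bij_is_surj)
  then show "inj_on (\<lambda>\<sigma>. \<sigma> \<circ> \<tau>) (graph_automorphisms E)"
    by (auto intro!: inj_onI surj_fun_eq[of \<tau> UNIV])
  then show "(\<lambda>\<sigma>. \<sigma> \<circ> \<tau>) ` graph_automorphisms E = graph_automorphisms E"
    using assms by (intro endo_inj_surj) (auto intro: comp_graph_automorphisms)
qed

definition automorphism_average :: "('n \<Rightarrow> 'n \<Rightarrow> bool) \<Rightarrow> real^'n^'n \<Rightarrow> real^'n^'n" where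
  "automorphism_average E A = mat_average (graph_automorphisms E) (\<lambda>\<sigma>. reindex_mat \<sigma> A)"

lemma feasible_automorphism_average:
  fixes E :: "'n::finite \<Rightarrow> 'n \<Rightarrow> bool"
  assumes "feasible E k Z X"
  shows "feasible E k (automorphism_average E Z) (automorphism_average E X)"
proof -
  have "feasible E k (reindex_mat \<sigma> Z) (reindex_mat \<sigma> X)" if "\<sigma> \<in> graph_automorphisms E" for \<sigma>
    using assms that by (intro feasible_reindex_mat[where E = E]) (auto simp: graph_automorphisms_def)
  then show ?thesis
    unfolding automorphism_average_def
    using id_graph_automorphisms by (intro feasible_mat_average) auto
qed

lemma trace_automorphism_average:
  fixes E :: "'n::finite \<Rightarrow> 'n \<Rightarrow> bool"
  shows "trace (automorphism_average E A) = trace A"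
proof -
  let ?G = "graph_automorphisms E"
  have "trace (reindex_mat \<sigma> A) = trace A" if "\<sigma> \<in> ?G" for \<sigma>
    using that by (simp add: graph_automorphisms_def trace_reindex_mat)
  moreover have "real (card ?G) \<noteq> 0"
    using id_graph_automorphisms by (auto simp: card_eq_0_iff)
  ultimately show ?thesis
    by (simp add: automorphism_average_def trace_def sum_divide_distrib[symmetric]
        sum.swap[of _ ?G])
qed

lemma reindex_mat_automorphism_average:
  fixes E :: "'n::finite \<Rightarrow> 'n \<Rightarrow> bool"
  assumes "\<tau> \<in> graph_automorphisms E"
  shows "reindex_mat \<tau> (automorphism_average E A) = automorphism_average E A"
proof -
  have "(\<Sum>\<sigma>\<in>graph_automorphisms E. A $ \<sigma> (\<tau> i) $ \<sigma> (\<tau> j)) =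
      (\<Sum>\<sigma>\<in>graph_automorphisms E. A $ \<sigma> i $ \<sigma> j)" for i j
    using sum.reindex_bij_betw[OF bij_betw_comp_right_graph_automorphisms[OF assms],
        of "\<lambda>\<sigma>. A $ \<sigma> i $ \<sigma> j"]
    by simp
  then show ?thesis
    by (simp add: vec_eq_iff automorphism_average_def)
qed

lemma automorphism_average_diag_eq:
  assumes "vertex_transitive E"
  shows "automorphism_average E A $ j $ j = automorphism_average E A $ i $ i"
proof -
  obtain \<tau> where "\<tau> \<in> graph_automorphisms E" "\<tau> i = j"
    using assms unfolding vertex_transitive_def graph_automorphisms_def by blast
  then show ?thesis
    using reindex_mat_nth[of \<tau> "automorphism_average E A" i i]
    by (simp add: reindex_mat_automorphism_average)
qed

theorem proposition2:
  fixes E :: "'n::finite \<Rightarrow> 'n \<Rightarrow> bool" and k :: nat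
  assumes "simple_graph E" and "vertex_transitive E" and "k \<ge> 1"
  shows "\<exists>Z X. feasible E k Z X
           \<and> (\<forall>Z' X'. feasible E k Z' X' \<longrightarrow> trace Z' \<le> trace Z)
           \<and> (\<forall>i j. i \<noteq> j \<longrightarrow> Z $ i $ i - Z $ i $ j - (real k - 1) * X $ i $ j \<ge> 0)"
proof -
  obtain Z X where feasible: "feasible E k Z X"
    and optimal: "\<And>Z' X'. feasible E k Z' X' \<Longrightarrow> trace Z' \<le> trace Z"
    using feasible_trace_maximum_exists[where E = E, OF assms(3)] by blast
  let ?Z = "automorphism_average E Z" and ?X = "automorphism_average E X"
  have "feasible E k ?Z ?X"
    using feasible_automorphism_average[OF feasible] .
  moreover have "trace ?Z = trace Z"
    by (rule trace_automorphism_average)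
  moreover have "0 \<le> ?Z $ i $ i - ?Z $ i $ j - (real k - 1) * ?X $ i $ j" for i j
    using feasible_redundant_constraint[OF \<open>feasible E k ?Z ?X\<close>]
      automorphism_average_diag_eq[OF assms(2)] .
  ultimately show ?thesis
    using optimal by metis
qed

end
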